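(* Let $\mathcal{P}$ be a locally geometric poset. If $\mathcal{P}$ has an M-ideal $\mathcal{Q}$ with $\operatorname{rk}(\mathcal{Q})=\operatorname{rk}(\mathcal{P})-1$, then $\mathcal{P}$ is pure, i.e., all maximal elements of $\mathcal{P}$ have the same rank.
   Context: All posets are finite, have a unique minimal element $\hat0$ and are ranked; $\operatorname{rk}$ of a poset is the maximum rank of its elements. $A(\cdot)$ denotes the set of atoms (rank-1 elements). $\bigvee T$ is the set of minimal upper bounds of $T$, $x\vee y=\bigvee\{x,y\}$, and $x\wedge y$ is the meet. A lattice is geometric if $y$ covers $x$ iff there is an atom $a\not\le x$ with $y=x\vee a$; $\mathcal{P}$ is locally geometric if each $\mathcal{P}_{\le x}$ is a geometric lattice. An element $x$ of a geometric lattice $L$ is modular if $x\wedge(y\vee z)=(x\wedge y)\vee z$ for all $z\le x$, $y\in L$. An order ideal is a downward-closed subset; it is pure if all its maximal elements have the same rank and join-closed if $T\subseteq\mathcal{Q}$ implies $\bigvee T\subseteq\mathcal{Q}$. An M-ideal of $\mathcal{P}$ is a pure, join-closed order ideal $\mathcal{Q}$ such that (1) $|a\vee y|\ge1$ for all $y\in\mathcal{Q}$ and $a\in A(\mathcal{P})\setminus A(\mathcal{Q})$, and (2) for every maximal element $x$ of $\mathcal{P}$ there is a maximal element $y$ of $\mathcal{Q}$ that is modular in $\mathcal{P}_{\le x}$. *)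

theory Defs
  imports Main
begin

text \<open>Posets are represented by a finite carrier set P of a type with a partial order.\<close>

definition covers :: "'a::order set \<Rightarrow> 'a \<Rightarrow> 'a \<Rightarrow> bool" where
  "covers P x y \<longleftrightarrow> x \<in> P \<and> y \<in> P \<and> x < y \<and> \<not> (\<exists>z\<in>P. x < z \<and> z < y)"

definition is_bottom :: "'a::order set \<Rightarrow> 'a \<Rightarrow> bool" where
  "is_bottom P z \<longleftrightarrow> z \<in> P \<and> (\<forall>x\<in>P. z \<le> x)"

definition rank :: "'a::order set \<Rightarrow> 'a \<Rightarrow> nat" where
  "rank P x = Max {card C | C. C \<subseteq> {y\<in>P. y \<le> x} \<and> Complete_Partial_Order.chain (\<le>) C} - 1"

definition ranked_poset :: "'a::order set \<Rightarrow> bool" where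
  "ranked_poset P \<longleftrightarrow> finite P \<and> (\<exists>z. is_bottom P z) \<and>
     (\<exists>rk::'a \<Rightarrow> nat. (\<forall>z. is_bottom P z \<longrightarrow> rk z = 0) \<and>
        (\<forall>x y. covers P x y \<longrightarrow> rk y = rk x + 1))"

definition poset_rank :: "'a::order set \<Rightarrow> nat" where
  "poset_rank P = Max (rank P ` P)"

definition atoms :: "'a::order set \<Rightarrow> 'a set" where
  "atoms P = {x\<in>P. rank P x = 1}"

definition maximal_elems :: "'a::order set \<Rightarrow> 'a set" where
  "maximal_elems P = {x\<in>P. \<not> (\<exists>y\<in>P. x < y)}"

definition mub :: "'a::order set \<Rightarrow> 'a set \<Rightarrow> 'a set" where
  "mub P T = {y\<in>P. (\<forall>t\<in>T. t \<le> y) \<and> \<not> (\<exists>z\<in>P. z < y \<and> (\<forall>t\<in>T. t \<le> z))}"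

definition downset :: "'a::order set \<Rightarrow> 'a \<Rightarrow> 'a set" where
  "downset P x = {y\<in>P. y \<le> x}"

definition is_lub :: "'a::order set \<Rightarrow> 'a set \<Rightarrow> 'a \<Rightarrow> bool" where
  "is_lub L S z \<longleftrightarrow> z \<in> L \<and> (\<forall>s\<in>S. s \<le> z) \<and> (\<forall>w\<in>L. (\<forall>s\<in>S. s \<le> w) \<longrightarrow> z \<le> w)"

definition is_glb :: "'a::order set \<Rightarrow> 'a set \<Rightarrow> 'a \<Rightarrow> bool" where
  "is_glb L S z \<longleftrightarrow> z \<in> L \<and> (\<forall>s\<in>S. z \<le> s) \<and> (\<forall>w\<in>L. (\<forall>s\<in>S. w \<le> s) \<longrightarrow> w \<le> z)"

definition is_lattice :: "'a::order set \<Rightarrow> bool" where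
  "is_lattice L \<longleftrightarrow> (\<forall>x\<in>L. \<forall>y\<in>L. (\<exists>z. is_lub L {x, y} z) \<and> (\<exists>z. is_glb L {x, y} z))"

definition ljoin :: "'a::order set \<Rightarrow> 'a \<Rightarrow> 'a \<Rightarrow> 'a" where
  "ljoin L x y = (THE z. is_lub L {x, y} z)"

definition lmeet :: "'a::order set \<Rightarrow> 'a \<Rightarrow> 'a \<Rightarrow> 'a" where
  "lmeet L x y = (THE z. is_glb L {x, y} z)"

definition geometric_lattice :: "'a::order set \<Rightarrow> bool" where
  "geometric_lattice L \<longleftrightarrow> is_lattice L \<and>
     (\<forall>x\<in>L. \<forall>y\<in>L. covers L x y \<longleftrightarrow> (\<exists>a\<in>atoms L. \<not> a \<le> x \<and> y = ljoin L x a))"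

definition locally_geometric :: "'a::order set \<Rightarrow> bool" where
  "locally_geometric P \<longleftrightarrow> ranked_poset P \<and> (\<forall>x\<in>P. geometric_lattice (downset P x))"

definition modular_elem :: "'a::order set \<Rightarrow> 'a \<Rightarrow> bool" where
  "modular_elem L x \<longleftrightarrow> x \<in> L \<and>
     (\<forall>y\<in>L. \<forall>z\<in>L. z \<le> x \<longrightarrow> lmeet L x (ljoin L y z) = ljoin L (lmeet L x y) z)"

definition order_ideal :: "'a::order set \<Rightarrow> 'a set \<Rightarrow> bool" where
  "order_ideal P Q \<longleftrightarrow> Q \<subseteq> P \<and> (\<forall>x\<in>Q. \<forall>y\<in>P. y \<le> x \<longrightarrow> y \<in> Q)"

definition pure :: "'a::order set \<Rightarrow> 'a set \<Rightarrow> bool" where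
  "pure P Q \<longleftrightarrow> (\<forall>x\<in>maximal_elems Q. \<forall>y\<in>maximal_elems Q. rank P x = rank P y)"

definition join_closed :: "'a::order set \<Rightarrow> 'a set \<Rightarrow> bool" where
  "join_closed P Q \<longleftrightarrow> (\<forall>T. T \<subseteq> Q \<longrightarrow> mub P T \<subseteq> Q)"

definition M_ideal :: "'a::order set \<Rightarrow> 'a set \<Rightarrow> bool" where
  "M_ideal P Q \<longleftrightarrow> order_ideal P Q \<and> pure P Q \<and> join_closed P Q \<and>
     (\<forall>y\<in>Q. \<forall>a\<in>atoms P - atoms Q. card (mub P {a, y}) \<ge> 1) \<and>
     (\<forall>x\<in>maximal_elems P. \<exists>y\<in>maximal_elems Q. modular_elem (downset P x) y)"

end

theory Submission
  imports Defs
begin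

text \<open>Let x be a maximal element of P and y a maximal element of Q below it, as provided by
  the M-ideal axioms. If x lies in Q, then condition (1) forces every atom of P below x, hence
  into Q; since in a locally geometric poset every element is the join of an atom and an element
  it covers, join-closedness gives Q = P, and rk Q = rk P - 1 leaves only rk P = 0. Otherwise
  y < x, so rk P - 1 = rk Q = rk y < rk x \<le> rk P by purity of Q, i.e. rk x = rk P.\<close>

lemma rank_downset:
  "rank P x = Max {card C | C. C \<subseteq> downset P x \<and> Complete_Partial_Order.chain (\<le>) C} - 1"
  by (simp add: rank_def downset_def)

lemma rank_cong:
  assumes "downset A x = downset B x"
  shows "rank A x = rank B x"
  using assms by (simp add: rank_downset)

lemma finite_chain_cards:
  assumes "finite P"
  shows "finite {card C | C. C \<subseteq> downset P x \<and> Complete_Partial_Order.chain (\<le>) C}"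
proof (rule finite_subset)
  show "{card C | C. C \<subseteq> downset P x \<and> Complete_Partial_Order.chain (\<le>) C} \<subseteq> card ` Pow P"
    by (auto simp: downset_def)
qed (use assms in simp)

lemma chain_card_le_rank:
  assumes "finite P" "C \<subseteq> downset P x" "Complete_Partial_Order.chain (\<le>) C"
  shows "card C \<le> rank P x + 1"
proof -
  have "card C \<le> Max {card C | C. C \<subseteq> downset P x \<and> Complete_Partial_Order.chain (\<le>) C}"
    using assms by (intro Max_ge finite_chain_cards) auto
  then show ?thesis by (simp add: rank_downset)
qed

lemma rank_chain_witness:
  assumes "finite P" "x \<in> P"
  obtains C where "C \<subseteq> downset P x" "Complete_Partial_Order.chain (\<le>) C"
    "card C = rank P x + 1"
proof -
  let ?S = "{card C | C. C \<subseteq> downset P x \<and> Complete_Partial_Order.chain (\<le>) C}"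
  have "{x} \<subseteq> downset P x" "Complete_Partial_Order.chain (\<le>) {x}"
    using assms(2) by (auto simp: downset_def chain_def)
  then have "card {x} \<in> ?S"
    by blast
  then have "?S \<noteq> {}" and "1 \<le> Max ?S"
    using finite_chain_cards[OF assms(1)] by (auto intro: Max_ge)
  moreover have "Max ?S \<in> ?S"
    using \<open>?S \<noteq> {}\<close> finite_chain_cards[OF assms(1)] by (rule Max_in[rotated])
  ultimately show ?thesis
    using that by (auto simp: rank_downset)
qed

lemma rank_mono:
  assumes "finite P" "y \<in> P" "y \<le> x"
  shows "rank P y \<le> rank P x"
proof -
  obtain C where C: "C \<subseteq> downset P y" "Complete_Partial_Order.chain (\<le>) C"
    "card C = rank P y + 1"
    using rank_chain_witness assms(1,2) by blast
  have "C \<subseteq> downset P x"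
    using C(1) assms(3) by (auto simp: downset_def)
  then show ?thesis
    using chain_card_le_rank[OF assms(1) _ C(2)] C(3) by fastforce
qed

lemma rank_less:
  assumes "finite P" "y \<in> P" "x \<in> P" "y < x"
  shows "rank P y < rank P x"
proof -
  obtain C where C: "C \<subseteq> downset P y" "Complete_Partial_Order.chain (\<le>) C"
    "card C = rank P y + 1"
    using rank_chain_witness assms(1,2) by blast
  have below: "\<forall>c\<in>C. c < x"
    using C(1) assms(4) by (auto simp: downset_def)
  have "insert x C \<subseteq> downset P x"
    using below assms(3) C(1) by (auto simp: downset_def)
  moreover have "Complete_Partial_Order.chain (\<le>) (insert x C)"
    using C(2) below by (auto simp: chain_def)
  ultimately have "card (insert x C) \<le> rank P x + 1"
    by (rule chain_card_le_rank[OF assms(1)])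
  moreover have "finite C" "x \<notin> C"
    using C(1) assms(1) below by (auto simp: downset_def intro: finite_subset)
  ultimately show ?thesis
    using C(3) by simp
qed

lemma rank_le_poset_rank:
  assumes "finite P" "x \<in> P"
  shows "rank P x \<le> poset_rank P"
  using assms by (simp add: poset_rank_def)

lemma rank_order_ideal:
  assumes "order_ideal P Q" "q \<in> Q"
  shows "rank Q q = rank P q"
  using assms by (intro rank_cong) (auto simp: order_ideal_def downset_def)

lemma poset_rank_pure_ideal:
  assumes "finite P" "order_ideal P Q" "pure P Q" "y \<in> maximal_elems Q"
  shows "poset_rank Q = rank P y"
proof -
  have "finite Q"
    using assms(1,2) finite_subset by (auto simp: order_ideal_def)
  have "y \<in> Q"
    using assms(4) by (simp add: maximal_elems_def)
  have "poset_rank Q \<in> rank Q ` Q"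
    unfolding poset_rank_def using \<open>finite Q\<close> \<open>y \<in> Q\<close> by (intro Max_in) auto
  then obtain q where q: "q \<in> Q" "rank Q q = poset_rank Q"
    by auto
  then obtain m where m: "m \<in> Q" "q \<le> m" "\<forall>b\<in>Q. m \<le> b \<longrightarrow> m = b"
    using finite_has_maximal2[OF \<open>finite Q\<close>] by blast
  have "m \<in> maximal_elems Q"
    using m by (auto simp: maximal_elems_def less_le)
  then have "rank P m = rank P y"
    using assms(3,4) unfolding pure_def by blast
  then have "rank Q m = rank Q y"
    using rank_order_ideal[OF assms(2)] m(1) \<open>y \<in> Q\<close> by simp
  moreover have "rank Q q \<le> rank Q m"
    using rank_mono[OF \<open>finite Q\<close> q(1) m(2)] .
  moreover have "rank Q y \<le> poset_rank Q"
    using rank_le_poset_rank[OF \<open>finite Q\<close> \<open>y \<in> Q\<close>] .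
  ultimately have "poset_rank Q = rank Q y"
    using q(2) by simp
  also have "\<dots> = rank P y"
    using rank_order_ideal[OF assms(2) \<open>y \<in> Q\<close>] .
  finally show ?thesis .
qed

lemma ljoin_is_lub:
  assumes "is_lattice L" "x \<in> L" "y \<in> L"
  shows "is_lub L {x, y} (ljoin L x y)"
proof -
  obtain z where z: "is_lub L {x, y} z"
    using assms by (auto simp: is_lattice_def)
  have "\<And>z'. is_lub L {x, y} z' \<Longrightarrow> z' = z"
    using z by (auto simp: is_lub_def intro: order.antisym)
  then have "ljoin L x y = z"
    unfolding ljoin_def using z by (rule the_equality[rotated])
  then show ?thesis
    using z by simp
qed

lemma lub_downset_in_mub:
  assumes "is_lub (downset P v) S v"
  shows "v \<in> mub P S"
  using assms by (fastforce simp: is_lub_def mub_def downset_def)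

lemma atoms_downset_subset: "atoms (downset P v) \<subseteq> atoms P"
proof
  fix a
  assume a: "a \<in> atoms (downset P v)"
  then have "a \<in> P" "a \<le> v"
    by (auto simp: atoms_def downset_def)
  then have "downset (downset P v) a = downset P a"
    by (auto simp: downset_def)
  then have "rank (downset P v) a = rank P a"
    by (rule rank_cong)
  with a \<open>a \<in> P\<close> show "a \<in> atoms P"
    by (simp add: atoms_def)
qed

lemma join_closedD:
  assumes "join_closed P Q" "T \<subseteq> Q"
  shows "mub P T \<subseteq> Q"
  using assms by (simp add: join_closed_def)

lemma exists_lower_cover_downset:
  assumes "finite P" "v \<in> P" "u0 \<in> P" "u0 < v"
  obtains u where "u \<in> P" "covers (downset P v) u v"
proof -
  have "finite {u\<in>P. u < v}" "u0 \<in> {u\<in>P. u < v}"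
    using assms by auto
  then obtain u where u: "u \<in> {u\<in>P. u < v}"
    and umax: "\<forall>w\<in>{u\<in>P. u < v}. u \<le> w \<longrightarrow> u = w"
    by (blast dest: finite_has_maximal2)
  have "covers (downset P v) u v"
    using u umax assms(2) by (auto simp: covers_def downset_def)
  with u show ?thesis
    using that by blast
qed

lemma join_closed_atoms_exhaust:
  assumes "finite P" "\<forall>v\<in>P. geometric_lattice (downset P v)"
    and "join_closed P Q" "atoms P \<subseteq> Q" "v \<in> P"
  shows "v \<in> Q"
  using assms(5)
proof (induction "rank P v" arbitrary: v rule: less_induct)
  case less
  show ?case
  proof (cases "\<exists>u\<in>P. u < v")
    case False
    then have "v \<in> mub P {}"
      using less.prems by (auto simp: mub_def)
    then show ?thesis
      using join_closedD[OF assms(3)] by blast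
  next
    case True
    then obtain u where u: "u \<in> P" "covers (downset P v) u v"
      using exists_lower_cover_downset[OF assms(1) less.prems] by blast
    let ?L = "downset P v"
    have geo: "geometric_lattice ?L"
      using assms(2) less.prems by blast
    have uv: "u \<in> ?L" "v \<in> ?L" "u < v"
      using u(2) by (simp_all add: covers_def)
    obtain a where a: "a \<in> atoms ?L" "v = ljoin ?L u a"
      using geo u(2) uv unfolding geometric_lattice_def by blast
    have "is_lub ?L {u, a} (ljoin ?L u a)"
      using geo uv(1) a(1) by (intro ljoin_is_lub) (auto simp: geometric_lattice_def atoms_def)
    then have "v \<in> mub P {u, a}"
      using a(2) by (simp add: lub_downset_in_mub)
    moreover have "u \<in> Q"
      using less.hyps rank_less[OF assms(1) u(1) less.prems uv(3)] u(1) by blast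
    moreover have "a \<in> Q"
      using a(1) atoms_downset_subset assms(4) by blast
    ultimately show ?thesis
      using join_closedD[OF assms(3), of "{u, a}"] by blast
  qed
qed

lemma M_ideal_containing_maximal_eq:
  assumes "locally_geometric P" "M_ideal P Q" "x \<in> maximal_elems P" "x \<in> Q"
  shows "Q = P"
proof -
  have fin: "finite P" and geo: "\<forall>v\<in>P. geometric_lattice (downset P v)"
    using assms(1) by (auto simp: locally_geometric_def ranked_poset_def)
  have ideal: "order_ideal P Q" and jc: "join_closed P Q"
    and joins: "\<forall>y\<in>Q. \<forall>a\<in>atoms P - atoms Q. card (mub P {a, y}) \<ge> 1"
    using assms(2) by (auto simp: M_ideal_def)
  have "atoms P \<subseteq> Q"
  proof
    fix a
    assume a: "a \<in> atoms P"
    show "a \<in> Q"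
    proof (rule ccontr)
      assume "a \<notin> Q"
      then have "a \<notin> atoms Q"
        by (simp add: atoms_def)
      then have "card (mub P {a, x}) \<ge> 1"
        using joins a assms(4) by blast
      then have "mub P {a, x} \<noteq> {}"
        by auto
      then obtain z where "z \<in> P" "x \<le> z" "a \<le> z"
        by (auto simp: mub_def)
      then have "a \<le> x"
        using assms(3) by (auto simp: maximal_elems_def less_le)
      with a ideal assms(4) \<open>a \<notin> Q\<close> show False
        by (auto simp: order_ideal_def atoms_def)
    qed
  qed
  then have "P \<subseteq> Q"
    using join_closed_atoms_exhaust[OF fin geo jc] by blast
  with ideal show ?thesis
    by (auto simp: order_ideal_def)
qed

theorem lemma4p1:
  fixes P Q :: "'a::order set"
  assumes "locally_geometric P"
    and "M_ideal P Q"
    and "poset_rank Q = poset_rank P - 1"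
  shows "pure P P"
proof -
  have fin: "finite P"
    using assms(1) by (simp add: locally_geometric_def ranked_poset_def)
  have ideal: "order_ideal P Q" and "pure P Q"
    using assms(2) by (auto simp: M_ideal_def)
  have "rank P x = poset_rank P" if x: "x \<in> maximal_elems P" for x
  proof -
    have "x \<in> P"
      using x by (simp add: maximal_elems_def)
    obtain y where y: "y \<in> maximal_elems Q" "y \<le> x"
      using assms(2) x by (fastforce simp: M_ideal_def modular_elem_def downset_def)
    show ?thesis
    proof (cases "x \<in> Q")
      case True
      then have "poset_rank P = 0"
        using M_ideal_containing_maximal_eq[OF assms(1,2) x] assms(3) by simp
      then show ?thesis
        using rank_le_poset_rank[OF fin \<open>x \<in> P\<close>] by simp
    next
      case False
      have "y \<in> P"
        using y(1) ideal by (auto simp: maximal_elems_def order_ideal_def)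
      with False y have "rank P y < rank P x"
        using rank_less[OF fin _ \<open>x \<in> P\<close>] by (auto simp: maximal_elems_def less_le)
      moreover have "poset_rank Q = rank P y"
        using poset_rank_pure_ideal[OF fin ideal \<open>pure P Q\<close> y(1)] .
      ultimately show ?thesis
        using assms(3) rank_le_poset_rank[OF fin \<open>x \<in> P\<close>] by linarith
    qed
  qed
  then show ?thesis
    unfolding pure_def by simp
qed

end
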